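(* Let $\mathbf{\Phi}\in\mathbb{R}^{m\times n}$ be a measurement matrix and $c>1$. Then OMP$_{cK}$ perfectly recovers any $K$-sparse signal $\mathbf{x}\in\mathbb{R}^n$ from the measurements $\mathbf{y}=\mathbf{\Phi}\mathbf{x}$ (i.e. $\hat{\mathbf{x}}^{\lceil cK\rceil}=\mathbf{x}$) if $$c\;\ge\;-\frac{4(1+\delta)}{1-\delta}\,\log\!\left(\frac12-\sqrt{\frac{\delta}{2+2\delta}}\right),\qquad\text{where }\delta:=\delta_{\lfloor (c+1)K\rfloor},$$ and $\log$ is the natural logarithm.
   Context: Orthogonal matching pursuit (OMP): given $\mathbf{y}\in\mathbb{R}^m$ and $\mathbf{\Phi}\in\mathbb{R}^{m\times n}$ with columns $\phi_1,\dots,\phi_n$, set $T^0=\emptyset$, $\mathbf{r}^0=\mathbf{y}$, and for $k=1,2,\dots$: choose $t^k\in\arg\max_{i}|\langle \mathbf{r}^{k-1},\phi_i\rangle|$; set $T^k=T^{k-1}\cup\{t^k\}$; let $\hat{\mathbf{x}}^k=\arg\min_{\mathbf{u}:\,\mathrm{supp}(\mathbf{u})=T^k}\|\mathbf{y}-\mathbf{\Phi}\mathbf{u}\|_2$; set $\mathbf{r}^k=\mathbf{y}-\mathbf{\Phi}\hat{\mathbf{x}}^k$. OMP$_{cK}$ is OMP run for $\lceil cK\rceil$ iterations, outputting $\hat{\mathbf{x}}^{\lceil cK\rceil}$. A vector is $K$-sparse if it has at most $K$ nonzero entries. The restricted isometry constant $\delta_j$ of $\mathbf{\Phi}$ is the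 smallest $\delta\ge0$ such that $(1-\delta)\|\mathbf{v}\|_2^2\le\|\mathbf{\Phi}\mathbf{v}\|_2^2\le(1+\delta)\|\mathbf{v}\|_2^2$ for every $j$-sparse $\mathbf{v}\in\mathbb{R}^n$. *)

theory Defs
  imports "HOL-Analysis.Analysis"
begin

definition supp :: "real^'n \<Rightarrow> 'n set" where
  "supp v = {i. v $ i \<noteq> 0}"

definition sparse :: "nat \<Rightarrow> real^'n \<Rightarrow> bool" where
  "sparse K v \<longleftrightarrow> card (supp v) \<le> K"

definition ric :: "real^'n^'m \<Rightarrow> nat \<Rightarrow> real" where
  "ric Phi j = Inf {d. d \<ge> 0 \<and> (\<forall>v. sparse j v \<longrightarrow>
      (1 - d) * (norm v)^2 \<le> (norm (Phi *v v))^2 \<and>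
      (norm (Phi *v v))^2 \<le> (1 + d) * (norm v)^2)}"

definition ls_min :: "real^'n^'m \<Rightarrow> real^'m \<Rightarrow> 'n set \<Rightarrow> real^'n \<Rightarrow> bool" where
  "ls_min Phi y T u \<longleftrightarrow> supp u \<subseteq> T \<and>
     (\<forall>w. supp w \<subseteq> T \<longrightarrow> norm (y - Phi *v u) \<le> norm (y - Phi *v w))"

text \<open>(T, xh) is a possible execution of N iterations of OMP on (y, Phi):
  T k is the index set and xh k the estimate after iteration k (any tie-breaking
  in the arg max and any choice of least-squares minimiser is allowed).\<close>
definition omp_run :: "real^'n^'m \<Rightarrow> real^'m \<Rightarrow> nat \<Rightarrow> (nat \<Rightarrow> 'n set) \<Rightarrow> (nat \<Rightarrow> real^'n) \<Rightarrow> bool" where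
  "omp_run Phi y N T xh \<longleftrightarrow>
     T 0 = {} \<and> xh 0 = 0 \<and>
     (\<forall>k. 1 \<le> k \<and> k \<le> N \<longrightarrow>
        (\<exists>t. (\<forall>i. \<bar>(y - Phi *v xh (k - 1)) \<bullet> column i Phi\<bar>
                    \<le> \<bar>(y - Phi *v xh (k - 1)) \<bullet> column t Phi\<bar>)
             \<and> T k = insert t (T (k - 1)))
        \<and> ls_min Phi y (T k) (xh k))"

end

theory Submission
  imports Defs
begin

text \<open>Write \<open>R\<^sub>j\<close> for the squared residual after \<open>j\<close> iterations, \<open>A = 1 - \<delta>\<close> and \<open>B = 1 + \<delta>\<close>.
  Since OMP picks the column most correlated with the residual, the RIP shows that one
  iteration shrinks \<open>R\<^sub>j - \<parallel>y - \<Phi>u\<parallel>\<^sup>2\<close> by the factor \<open>1 - A/(BP)\<close>, for any competitor \<open>u\<close>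
  supported on the selected indices plus \<open>P\<close> others. Taking for \<open>u\<close> the signal \<open>x\<close> without
  all but its \<open>2\<^sup>i - 1\<close> largest undetected entries, a phase of \<open>\<lfloor>c 2\<^sup>i / 4\<rfloor>\<close> iterations brings \<open>R\<close>
  close to \<open>B\<close> times the energy of the removed entries. Phases \<open>i = 1, 2, \<dots>\<close> are run until
  this tail energy first drops by the factor \<open>2\<epsilon>\<close>, where \<open>\<epsilon> = exp (-cA/(4B))\<close>; the hypothesis
  on \<open>c\<close> yields \<open>\<epsilon> \<le> 1/2\<close> and \<open>4\<epsilon>(1 - \<epsilon>) \<le> A/B\<close>, and then \<open>R\<^sub>j \<ge> A \<cdot> (energy of the undetected
  entries)\<close> shows that at least \<open>2\<^sup>i\<^sup>-\<^sup>1\<close> new support indices were detected within \<open>c 2\<^sup>i\<^sup>-\<^sup>1\<close>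
  iterations. Induction on the number of undetected indices puts \<open>supp x\<close> inside the selected
  set after \<open>\<lfloor>cK\<rfloor>\<close> iterations, whereupon least squares returns \<open>x\<close>.\<close>

lemma norm_squared_eq_sum: "(norm (v::real^'n))\<^sup>2 = (\<Sum>i\<in>UNIV. (v$i)\<^sup>2)"
  unfolding power2_norm_eq_inner inner_vec_def by (simp add: power2_eq_square)

lemma sum_squares_le_norm_squared: "(\<Sum>i\<in>F. ((v::real^'n)$i)\<^sup>2) \<le> (norm v)\<^sup>2"
  unfolding norm_squared_eq_sum by (rule sum_mono2) auto

lemma norm_diff_squared: "(norm (r - z))\<^sup>2 = (norm r)\<^sup>2 - 2*(r \<bullet> z) + (norm z)\<^sup>2"
  unfolding power2_norm_eq_inner
  by (simp add: inner_diff_left inner_diff_right inner_commute algebra_simps)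

lemma norm_diff_scaleR_squared:
  "(norm (r - a *\<^sub>R z))\<^sup>2 = (norm r)\<^sup>2 - 2*a*(r \<bullet> z) + a\<^sup>2*(norm z)\<^sup>2"
  unfolding norm_diff_squared by (simp add: power2_eq_square)

lemma inner_matrix_vector_mult:
  "(r::real^'m) \<bullet> ((Phi::real^'n^'m) *v w) = (\<Sum>i\<in>UNIV. w$i * (r \<bullet> column i Phi))"
  by (simp add: matrix_mult_sum inner_sum_right scalar_mult_eq_scaleR)

lemma sum_linear_minus_quadratic_le:
  fixes M a :: real and w :: "'i \<Rightarrow> real"
  assumes "0 < a"
  shows "(\<Sum>i\<in>F. 2 * (M * \<bar>w i\<bar>) - a * (w i)\<^sup>2) \<le> card F * (M\<^sup>2 / a)"
proof -
  have "2 * (M * \<bar>w i\<bar>) - a * (w i)\<^sup>2 \<le> M\<^sup>2 / a" for i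
  proof -
    have "a * (2 * (M * \<bar>w i\<bar>) - a * (w i)\<^sup>2) \<le> M\<^sup>2"
      using zero_le_power2[of "M - a * \<bar>w i\<bar>"] by (simp add: power2_eq_square algebra_simps)
    thus ?thesis using assms by (simp add: field_simps mult.commute)
  qed
  hence "(\<Sum>i\<in>F. 2 * (M * \<bar>w i\<bar>) - a * (w i)\<^sup>2) \<le> (\<Sum>i\<in>F. M\<^sup>2 / a)" by (rule sum_mono)
  thus ?thesis by simp
qed

lemma supp_diff_subset: "supp (u - v) \<subseteq> supp u \<union> supp v"
  unfolding supp_def by auto

lemma supp_add_subset: "supp (u + v) \<subseteq> supp u \<union> supp v"
  unfolding supp_def by auto

lemma supp_eq_empty_iff: "supp v = {} \<longleftrightarrow> v = 0"
  unfolding supp_def by (auto simp: vec_eq_iff)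

lemma supp_scaleR_axis: "supp (a *\<^sub>R axis t (1::real)) \<subseteq> {t}"
  unfolding supp_def axis_def by auto

lemma matrix_vector_mult_scaleR_axis:
  "(Phi::real^'n^'m) *v (u + a *\<^sub>R axis i 1) = Phi *v u + a *\<^sub>R column i Phi"
  by (simp add: matrix_vector_right_distrib matrix_vector_mult_basis matrix_vector_mult_scaleR)

lemma mix_le_of_slow_decay:
  fixes e g a b :: real
  assumes "0 < e" "e \<le> 1/2" "0 \<le> g" "g \<le> e" "0 \<le> a" "2*e*a \<le> b"
  shows "(1-g)*b + g*(2*(1-e)*a) \<le> 2*(1-e)*b"
proof -
  have b: "0 \<le> b" using assms by (smt (verit) mult_nonneg_nonneg)
  have "e*((1-g)*b + g*(2*(1-e)*a)) = e*(1-g)*b + g*(1-e)*(2*e*a)" by (simp add: algebra_simps)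
  also have "\<dots> \<le> e*(1-g)*b + g*(1-e)*b" using assms by (simp add: mult_left_mono)
  also have "\<dots> = e*b + g*(1-2*e)*b" by (simp add: algebra_simps)
  also have "\<dots> \<le> e*b + e*(1-2*e)*b" using assms b by (simp add: mult_right_mono)
  also have "\<dots> = e*(2*(1-e)*b)" by (simp add: algebra_simps)
  finally show ?thesis using assms(1) by (simp add: mult_le_cancel_left_pos)
qed

lemma mix_less_of_fast_decay:
  fixes e g a b :: real
  assumes "0 < e" "e \<le> 1/2" "0 \<le> g" "g \<le> e" "0 \<le> b" "b < 2*e*a"
  shows "(1-g)*b + g*(2*(1-e)*a) < 4*e*(1-e)*a"
proof -
  have a: "0 \<le> a" using assms by (smt (verit) mult_pos_pos zero_less_mult_iff)
  have "(1-g)*b + g*(2*(1-e)*a) < (1-g)*(2*e*a) + g*(2*(1-e)*a)"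
    using assms by (simp add: mult_strict_left_mono)
  also have "\<dots> = 2*e*a + 2*(g*(1-2*e)*a)" by (simp add: algebra_simps)
  also have "\<dots> \<le> 2*e*a + 2*(e*(1-2*e)*a)" using assms a by (simp add: mult_right_mono)
  also have "\<dots> = 4*e*(1-e)*a" by (simp add: algebra_simps)
  finally show ?thesis .
qed

lemma first_sharp_drop:
  fixes t :: "nat \<Rightarrow> real"
  assumes "0 < t 0" "t n = 0" "0 < \<mu>"
  obtains L where "t (Suc L) < \<mu> * t L"
    and "\<And>i. i < L \<Longrightarrow> \<mu> * t i \<le> t (Suc i)" and "0 < t L"
proof -
  have ex: "\<exists>L. t (Suc L) < \<mu> * t L"
  proof (rule ccontr)
    assume "\<not> ?thesis"
    hence "0 < t i" for i
    proof (induction i)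
      case (Suc i)
      have "0 < \<mu> * t i" using Suc.IH[OF Suc.prems] assms(3) by simp
      also have "\<dots> \<le> t (Suc i)" using Suc.prems by (simp add: not_less)
      finally show ?case .
    qed (use assms in simp)
    thus False using assms(2) by (metis less_irrefl)
  qed
  define L where "L = (LEAST L. t (Suc L) < \<mu> * t L)"
  have drop: "t (Suc L) < \<mu> * t L" unfolding L_def by (rule LeastI_ex[OF ex])
  have slow: "\<mu> * t i \<le> t (Suc i)" if "i < L" for i
    using not_less_Least[of i "\<lambda>L. t (Suc L) < \<mu> * t L"] that unfolding L_def by simp
  have "0 < t i" if "i \<le> L" for i
    using that
  proof (induction i)
    case (Suc i)
    then show ?case using slow[of i] assms(3) mult_pos_pos[of \<mu> "t i"] by linarith
  qed (use assms in simp)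
  from that[OF drop slow this[of L]] show ?thesis by simp
qed

lemma sum_power2_atLeast1_atMost: "(\<Sum>l\<in>{1..i}. (2::real)^l) = 2^(i+1) - 2"
  by (induction i) (auto simp: sum.atLeast1_atMost_eq)

lemma ln_one_minus_le:
  fixes x :: real assumes "0 \<le> x" "x < 1" shows "ln (1 - x) \<le> - (2*x/(2-x))"
proof -
  define g where "g z = ln (1 - z) + 2*z/(2-z)" for z :: real
  have "g x \<le> g 0"
  proof (rule DERIV_nonpos_imp_nonincreasing[OF assms(1)])
    fix z :: real assume z: "0 \<le> z" "z \<le> x"
    hence z1: "z < 1" using assms by simp
    have "DERIV g z :> (- 1/(1-z) + 4/(2-z)^2)"
      unfolding g_def using z1 by (auto intro!: derivative_eq_intros simp: field_simps power2_eq_square)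
    moreover have "4*(1-z) \<le> (2-z)^2" by (simp add: power2_eq_square algebra_simps)
    hence "- 1/(1-z) + 4/(2-z)^2 \<le> 0" using z1 by (simp add: divide_simps)
    ultimately show "\<exists>y. DERIV g z :> y \<and> y \<le> 0" by blast
  qed
  thus ?thesis unfolding g_def by simp
qed

lemma one_minus_power_le_exp:
  fixes x :: real assumes "0 \<le> x" "x \<le> 1"
  shows "(1 - x)^m \<le> exp (- real m * (2*x/(2-x)))"
proof (cases "x = 1")
  case True
  then show ?thesis by (cases m) auto
next
  case False
  hence "x < 1" using assms by simp
  hence "(1 - x)^m = exp (real m * ln (1 - x))" by (simp add: exp_of_nat_mult)
  also have "\<dots> \<le> exp (real m * (- (2*x/(2-x))))"
    using mult_left_mono[OF ln_one_minus_le[OF assms(1) \<open>x < 1\<close>], of "real m"] by simp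
  finally show ?thesis by simp
qed

lemma phase_contraction_le_exp:
  fixes \<rho> \<kappa> :: real
  assumes "0 < \<rho>" "\<rho> \<le> 1" "2/3 \<le> \<rho> * \<kappa>" "1 \<le> i"
  shows "(1 - \<rho> / real (2^i - 1 :: nat)) ^ nat \<lfloor>\<kappa> * 2^i\<rfloor> \<le> exp (- \<rho> * \<kappa>)"
proof -
  define P where "P = real (2^i - 1 :: nat)"
  define m where "m = nat \<lfloor>\<kappa> * 2^i\<rfloor>"
  have "(2::nat) \<le> 2^i" "(2::real) \<le> 2^i"
    using power_increasing[OF assms(4), of "2::nat"] power_increasing[OF assms(4), of "2::real"] by simp_all
  hence P: "1 \<le> P" "P + 1 = 2^i" unfolding P_def by (simp_all add: of_nat_diff)
  have "0 < \<kappa>" using zero_less_mult_pos[of \<rho> \<kappa>] assms by simp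
  hence m: "\<kappa> * 2^i - 1 \<le> real m" unfolding m_def by linarith
  have "2 * \<rho> \<le> 2/3 * (2 + \<rho>)" using assms(2) by simp
  also have "\<dots> \<le> \<rho> * \<kappa> * (2 + \<rho>)" using assms by (intro mult_right_mono) auto
  finally have "2 * \<rho> \<le> \<rho> * \<kappa> * (2 + \<rho>)" .
  moreover have "(\<kappa> * 2^i - 1) * (2*\<rho>) - \<rho> * \<kappa> * (2*P - \<rho>) = \<rho> * \<kappa> * (2 + \<rho>) - 2 * \<rho>"
    unfolding P(2)[symmetric] by (simp add: algebra_simps)
  ultimately have "\<rho> * \<kappa> * (2*P - \<rho>) \<le> (\<kappa> * 2^i - 1) * (2*\<rho>)" by linarith
  also have "\<dots> \<le> real m * (2*\<rho>)" using m assms(1) by (simp add: mult_right_mono)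
  finally have "\<rho> * \<kappa> \<le> real m * (2*(\<rho>/P)/(2-\<rho>/P))"
    using P assms by (simp add: field_simps)
  hence "exp (- real m * (2*(\<rho>/P)/(2-\<rho>/P))) \<le> exp (- \<rho> * \<kappa>)" by simp
  moreover have "(1 - \<rho>/P)^m \<le> exp (- real m * (2*(\<rho>/P)/(2-\<rho>/P)))"
    using assms P by (intro one_minus_power_le_exp) (auto simp: divide_le_eq)
  ultimately show "(1 - \<rho> / real (2^i - 1 :: nat)) ^ m \<le> exp (- \<rho> * \<kappa>)"
    unfolding P_def[symmetric] by linarith
qed

lemma omp_rate_root:
  fixes d :: real
  assumes "0 \<le> d" "d < 1"
  defines "q \<equiv> 1/2 - sqrt (d / (2 + 2 * d))"
  shows "0 < q" "q \<le> 1/2" "4 * q * (1 - q) = (1 - d) / (1 + d)"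
proof -
  define a where "a = sqrt (d / (2 + 2 * d))"
  have a: "0 \<le> a" "a^2 = d / (2 + 2 * d)" unfolding a_def using assms by simp_all
  have "d / (2 + 2 * d) < 1/4" using assms by (simp add: divide_simps)
  hence "a^2 < (1/2)^2" using a by (simp add: power2_eq_square)
  hence "a < 1/2" using power2_less_imp_less[of a "1/2"] by simp
  thus "0 < q" "q \<le> 1/2" using a unfolding q_def a_def[symmetric] by auto
  have "4 * q * (1 - q) = 1 - 4 * a^2" unfolding q_def a_def[symmetric] by (simp add: power2_eq_square algebra_simps)
  thus "4 * q * (1 - q) = (1 - d) / (1 + d)" using a assms by (simp add: field_simps)
qed

lemma omp_iteration_counts:
  fixes c :: real and K :: nat
  assumes "1 < c" "1 \<le> K"
  shows "nat \<lfloor>(c + 1) * K\<rfloor> = nat \<lfloor>c * K\<rfloor> + K"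
    and "nat \<lfloor>c * K\<rfloor> \<le> nat \<lceil>c * K\<rceil>"
    and "nat \<lceil>c * K\<rceil> \<le> nat \<lfloor>(c + 1) * K\<rfloor>"
proof -
  have "0 \<le> \<lfloor>c * K\<rfloor>" using assms by simp
  moreover have "\<lfloor>(c + 1) * K\<rfloor> = \<lfloor>c * K\<rfloor> + int K"
    by (metis distrib_right mult_1 floor_add_int of_int_of_nat_eq)
  ultimately show sum: "nat \<lfloor>(c + 1) * K\<rfloor> = nat \<lfloor>c * K\<rfloor> + K" by (simp add: nat_add_distrib)
  show "nat \<lfloor>c * K\<rfloor> \<le> nat \<lceil>c * K\<rceil>" by (intro nat_mono floor_le_ceiling)
  have "\<lceil>c * K\<rceil> \<le> \<lfloor>c * K\<rfloor> + 1" using ceiling_diff_floor_le_1[of "c * K"] by linarith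
  thus "nat \<lceil>c * K\<rceil> \<le> nat \<lfloor>(c + 1) * K\<rfloor>" unfolding sum using assms by linarith
qed

lemma ls_min_residual_orthogonal:
  assumes "ls_min Phi y T u" "i \<in> T"
  shows "(y - Phi *v u) \<bullet> column i Phi = 0"
proof -
  define r where "r = y - Phi *v u"
  define p where "p = r \<bullet> column i Phi"
  define n where "n = (norm (column i Phi))\<^sup>2"
  define a where "a = p / (n + 1)"
  have n0: "n \<ge> 0" unfolding n_def by simp
  have "supp (u + a *\<^sub>R axis i 1) \<subseteq> T"
    using assms supp_add_subset[of u] supp_scaleR_axis[of a i] unfolding ls_min_def by blast
  then have "norm r \<le> norm (r - a *\<^sub>R column i Phi)"
    using assms(1) unfolding ls_min_def r_def by (metis matrix_vector_mult_scaleR_axis diff_diff_eq)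
  then have "(norm r)\<^sup>2 \<le> (norm r)\<^sup>2 - 2 * a * p + a\<^sup>2 * n"
    unfolding p_def n_def norm_diff_scaleR_squared[symmetric] by simp
  hence "0 \<le> a * (a * n - 2 * p)" by (simp add: algebra_simps power2_eq_square)
  also have "a * (a * n - 2 * p) = - (p\<^sup>2 * (n + 2)) / (n + 1)\<^sup>2"
    using n0 by (simp add: a_def field_simps power2_eq_square)
  finally have "p\<^sup>2 * (n + 2) \<le> 0" using n0 by (simp add: divide_le_0_iff)
  hence "p = 0" using n0 by (simp add: mult_le_0_iff)
  thus ?thesis unfolding p_def r_def .
qed

definition rip :: "real^'n^'m \<Rightarrow> nat \<Rightarrow> real \<Rightarrow> bool" where
  "rip Phi j d \<longleftrightarrow> (\<forall>v. sparse j v \<longrightarrow>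
      (1 - d) * (norm v)\<^sup>2 \<le> (norm (Phi *v v))\<^sup>2 \<and> (norm (Phi *v v))\<^sup>2 \<le> (1 + d) * (norm v)\<^sup>2)"

lemma ric_eq_Inf_rip: "ric Phi j = Inf {d. 0 \<le> d \<and> rip Phi j d}"
  unfolding ric_def rip_def by simp

lemma rip_exists: "\<exists>d\<ge>0. rip Phi j d"
proof -
  obtain b where "\<And>v. norm (Phi *v v) \<le> norm v * b"
    using bounded_linear.pos_bounded[OF matrix_vector_mul_bounded_linear[of Phi]] by blast
  then have "(norm (Phi *v v))\<^sup>2 \<le> b\<^sup>2 * (norm v)\<^sup>2" for v
    by (metis norm_ge_zero power_mono power_mult_distrib mult.commute)
  then have "rip Phi j (max 1 (b\<^sup>2))"
    unfolding rip_def
    by (smt (verit, best) mult_right_mono mult_nonpos_nonneg zero_le_power2)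
  thus ?thesis by (intro exI[of _ "max 1 (b\<^sup>2)"]) simp
qed

lemma ric_nonneg: "0 \<le> ric Phi j"
  unfolding ric_eq_Inf_rip using rip_exists[of Phi j] by (intro cInf_greatest) auto

text \<open>The infimum is attained: each RIP inequality at a fixed \<open>v \<noteq> 0\<close> is a lower bound on \<open>d\<close>.\<close>
lemma rip_ric:
  fixes Phi :: "real^'n^'m"
  shows "rip Phi j (ric Phi j)"
  unfolding rip_def
proof (intro allI impI)
  fix v :: "real^'n" assume v: "sparse j v"
  define D where "D = {d. 0 \<le> d \<and> rip Phi j d}"
  define n where "n = (norm v)\<^sup>2"
  define p where "p = (norm (Phi *v v))\<^sup>2"
  have D: "D \<noteq> {}" using rip_exists[of Phi j] unfolding D_def by blast
  show "(1 - ric Phi j) * (norm v)\<^sup>2 \<le> (norm (Phi *v v))\<^sup>2 \<and>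
        (norm (Phi *v v))\<^sup>2 \<le> (1 + ric Phi j) * (norm v)\<^sup>2"
  proof (cases "v = 0")
    case False
    hence n: "0 < n" unfolding n_def by simp
    have "(n - p) / n \<le> Inf D"
    proof (rule cInf_greatest[OF D])
      fix d assume "d \<in> D"
      hence "(1 - d) * n \<le> p" using v unfolding D_def rip_def n_def p_def by blast
      thus "(n - p) / n \<le> d" using n by (simp add: divide_le_eq algebra_simps)
    qed
    moreover have "(p - n) / n \<le> Inf D"
    proof (rule cInf_greatest[OF D])
      fix d assume "d \<in> D"
      hence "p \<le> (1 + d) * n" using v unfolding D_def rip_def n_def p_def by blast
      thus "(p - n) / n \<le> d" using n by (simp add: divide_le_eq algebra_simps)
    qed
    ultimately show ?thesis using n unfolding ric_eq_Inf_rip D_def[symmetric] n_def[symmetric] p_def[symmetric]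
      by (simp add: divide_le_eq algebra_simps)
  qed simp
qed

locale omp_rip =
  fixes Phi :: "real^'n^'m" and x :: "real^'n" and T :: "nat \<Rightarrow> 'n set" and xh :: "nat \<Rightarrow> real^'n"
    and N :: nat and d :: real and J :: nat
  assumes run: "omp_run Phi (Phi *v x) N T xh"
    and rip: "rip Phi J d"
    and d_nonneg: "0 \<le> d" and d_less_1: "d < 1" and J_pos: "1 \<le> J"
begin

abbreviation "y \<equiv> Phi *v x"
definition "r j = y - Phi *v xh j"
definition "R j = (norm (r j))\<^sup>2"
definition "A = 1 - d"
definition "B = 1 + d"
definition "corr j = Max (range (\<lambda>i. \<bar>r j \<bullet> column i Phi\<bar>))"

lemma A_pos: "0 < A" and B_pos: "0 < B" and A_le_B: "A \<le> B"
  using d_nonneg d_less_1 by (auto simp: A_def B_def)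

lemma rip_lower: "card (supp v) \<le> J \<Longrightarrow> A * (norm v)\<^sup>2 \<le> (norm (Phi *v v))\<^sup>2"
  and rip_upper: "card (supp v) \<le> J \<Longrightarrow> (norm (Phi *v v))\<^sup>2 \<le> B * (norm v)\<^sup>2"
  using rip unfolding rip_def sparse_def A_def B_def by auto

lemma T_0: "T 0 = {}" and xh_0: "xh 0 = 0"
  using run unfolding omp_run_def by auto

lemma omp_step:
  assumes "1 \<le> k" "k \<le> N"
  shows "\<exists>t. (\<forall>i. \<bar>r (k - 1) \<bullet> column i Phi\<bar> \<le> \<bar>r (k - 1) \<bullet> column t Phi\<bar>)
            \<and> T k = insert t (T (k - 1))"
    and "ls_min Phi y (T k) (xh k)"
  using run assms unfolding omp_run_def r_def by auto

lemma T_Suc: "Suc j \<le> N \<Longrightarrow>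
    \<exists>t. (\<forall>i. \<bar>r j \<bullet> column i Phi\<bar> \<le> \<bar>r j \<bullet> column t Phi\<bar>) \<and> T (Suc j) = insert t (T j)"
  using omp_step(1)[of "Suc j"] by simp

lemma T_mono: "j \<le> j' \<Longrightarrow> j' \<le> N \<Longrightarrow> T j \<subseteq> T j'"
proof (induction j' rule: dec_induct)
  case (step n)
  then show ?case using T_Suc[of n] by auto
qed simp

lemma card_T: "j \<le> N \<Longrightarrow> card (T j) \<le> j"
proof (induction j)
  case (Suc j)
  then obtain t where "T (Suc j) = insert t (T j)" using T_Suc[of j] by auto
  then show ?case using Suc by (simp add: card_insert_if)
qed (simp add: T_0)

lemma supp_xh: "j \<le> N \<Longrightarrow> supp (xh j) \<subseteq> T j"
  using omp_step(2)[of j] xh_0 by (cases "j = 0") (auto simp: ls_min_def supp_def)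

lemma r_orthogonal: "j \<le> N \<Longrightarrow> i \<in> T j \<Longrightarrow> r j \<bullet> column i Phi = 0"
  using ls_min_residual_orthogonal[OF omp_step(2)[of j]] T_0 by (cases "j = 0") (auto simp: r_def)

lemma R_le: assumes "j \<le> N" "supp u \<subseteq> T j" shows "R j \<le> (norm (y - Phi *v u))\<^sup>2"
proof (cases "j = 0")
  case True
  then show ?thesis using assms T_0 supp_eq_empty_iff[of u] by (simp add: R_def r_def xh_0)
next
  case False
  then show ?thesis using omp_step(2)[of j] assms unfolding ls_min_def R_def r_def
    by (simp add: power_mono)
qed

lemma abs_corr_le: "\<bar>r j \<bullet> column i Phi\<bar> \<le> corr j"
  unfolding corr_def by (rule Max_ge) auto

lemma R_Suc_le: assumes "Suc j \<le> N" shows "R (Suc j) \<le> R j - (corr j)\<^sup>2 / B"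
proof -
  obtain t where tmax: "\<forall>i. \<bar>r j \<bullet> column i Phi\<bar> \<le> \<bar>r j \<bullet> column t Phi\<bar>"
    and Tt: "T (Suc j) = insert t (T j)" using T_Suc[OF assms] by blast
  define p where "p = r j \<bullet> column t Phi"
  have p: "\<bar>p\<bar> = corr j"
    unfolding p_def corr_def using tmax by (intro antisym Max_ge Max.boundedI) auto
  have "card (supp (axis t (1::real))) \<le> J" using J_pos by (simp add: supp_def axis_def)
  from rip_upper[OF this] have col: "(norm (column t Phi))\<^sup>2 \<le> B"
    by (simp add: matrix_vector_mult_basis)
  have "supp (xh j + (p / B) *\<^sub>R axis t 1) \<subseteq> T (Suc j)"
    using supp_add_subset[of "xh j"] supp_scaleR_axis[of "p / B" t] supp_xh[of j] assms Tt by auto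
  hence "R (Suc j) \<le> (norm (r j - (p / B) *\<^sub>R column t Phi))\<^sup>2"
    using R_le[of "Suc j"] assms unfolding r_def by (metis matrix_vector_mult_scaleR_axis diff_diff_eq)
  also have "\<dots> = R j - 2 * (p / B) * p + (p / B)\<^sup>2 * (norm (column t Phi))\<^sup>2"
    unfolding norm_diff_scaleR_squared R_def p_def ..
  also have "\<dots> \<le> R j - 2 * (p / B) * p + (p / B)\<^sup>2 * B" using col by (simp add: mult_left_mono)
  also have "\<dots> = R j - (corr j)\<^sup>2 / B"
    using B_pos p[symmetric] by (simp add: field_simps power2_eq_square)
  finally show ?thesis .
qed

lemma corr_lower:
  fixes P :: nat
  assumes j: "j \<le> N" and u: "supp u \<subseteq> T j \<union> L" and card: "card (T j \<union> L) \<le> J"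
    and P: "card L \<le> P" "1 \<le> P"
  shows "A * (R j - (norm (y - Phi *v u))\<^sup>2) / P \<le> (corr j)\<^sup>2"
proof -
  define w where "w = u - xh j"
  define F where "F = L - T j"
  have w: "supp w \<subseteq> T j \<union> L" using supp_diff_subset[of u] supp_xh[OF j] u unfolding w_def by auto
  have "card (supp w) \<le> J" using card_mono[OF _ w] card by (meson finite le_trans)
  hence Phi_w: "A * (norm w)\<^sup>2 \<le> (norm (Phi *v w))\<^sup>2" by (rule rip_lower)
  have F: "card F \<le> P" using P card_mono[of L F] unfolding F_def by auto
  \<comment> \<open>\<open>r\<^sub>j\<close> is orthogonal to the selected columns, so only the coordinates in \<open>F\<close> contribute.\<close>
  have "w $ i * (r j \<bullet> column i Phi) = 0" if "i \<notin> F" for i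
    using that w r_orthogonal[OF j, of i] unfolding F_def supp_def by auto
  then have "r j \<bullet> (Phi *v w) = (\<Sum>i\<in>F. w$i * (r j \<bullet> column i Phi))"
    unfolding inner_matrix_vector_mult by (intro sum.mono_neutral_right) auto
  also have "\<dots> \<le> (\<Sum>i\<in>F. corr j * \<bar>w$i\<bar>)"
  proof (rule sum_mono)
    fix i
    have "w$i * (r j \<bullet> column i Phi) \<le> \<bar>w$i\<bar> * \<bar>r j \<bullet> column i Phi\<bar>"
      by (metis abs_ge_self abs_mult)
    also have "\<dots> \<le> \<bar>w$i\<bar> * corr j" by (simp add: abs_corr_le mult_left_mono)
    finally show "w$i * (r j \<bullet> column i Phi) \<le> corr j * \<bar>w$i\<bar>" by (simp add: mult.commute)
  qed
  finally have corr_w: "r j \<bullet> (Phi *v w) \<le> (\<Sum>i\<in>F. corr j * \<bar>w$i\<bar>)" .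
  have "y - Phi *v u = r j - Phi *v w" by (simp add: r_def w_def matrix_vector_mult_diff_distrib)
  hence "R j - (norm (y - Phi *v u))\<^sup>2 = 2 * (r j \<bullet> (Phi *v w)) - (norm (Phi *v w))\<^sup>2"
    by (simp add: norm_diff_squared R_def)
  also have "\<dots> \<le> 2 * (\<Sum>i\<in>F. corr j * \<bar>w$i\<bar>) - A * (\<Sum>i\<in>F. (w$i)\<^sup>2)"
    using corr_w Phi_w mult_left_mono[OF sum_squares_le_norm_squared[of w F] less_imp_le[OF A_pos]]
    by linarith
  also have "\<dots> = (\<Sum>i\<in>F. 2 * (corr j * \<bar>w$i\<bar>) - A * (w$i)\<^sup>2)"
    by (simp add: sum_subtractf sum_distrib_left)
  also have "\<dots> \<le> card F * ((corr j)\<^sup>2 / A)" by (rule sum_linear_minus_quadratic_le[OF A_pos])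
  also have "\<dots> \<le> P * ((corr j)\<^sup>2 / A)" using F A_pos by (intro mult_right_mono) auto
  finally show ?thesis using A_pos P by (simp add: field_simps mult.commute)
qed

lemma R_Suc_contraction:
  fixes P :: nat
  assumes "Suc j \<le> N" and "supp u \<subseteq> T j \<union> L" and "card (T j \<union> L) \<le> J"
    and "card L \<le> P" and "1 \<le> P"
  shows "R (Suc j) - (norm (y - Phi *v u))\<^sup>2 \<le> (1 - A/(B*P)) * (R j - (norm (y - Phi *v u))\<^sup>2)"
proof -
  define E where "E = (norm (y - Phi *v u))\<^sup>2"
  have "A * (R j - E) / P / B \<le> (corr j)\<^sup>2 / B"
    using divide_right_mono[OF corr_lower[OF _ assms(2-5)]] B_pos assms(1) unfolding E_def by simp
  hence "R (Suc j) \<le> R j - A * (R j - E) / P / B" using R_Suc_le[OF assms(1)] by linarith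
  thus ?thesis using B_pos assms(5) unfolding E_def[symmetric] by (simp add: field_simps)
qed

lemma contraction_factor_bounds:
  fixes P :: nat assumes "1 \<le> P" shows "0 \<le> 1 - A/(B*P)" "1 - A/(B*P) < 1"
proof -
  have "B * 1 \<le> B * real P" using B_pos assms by (intro mult_left_mono) auto
  hence "A \<le> B * real P" using A_le_B by simp
  thus "0 \<le> 1 - A/(B*P)" using B_pos assms by (simp add: divide_le_eq)
  show "1 - A/(B*P) < 1" using A_pos B_pos assms by simp
qed

lemma R_contraction:
  fixes P :: nat
  assumes "j\<^sub>0 + n \<le> N" and "supp u \<subseteq> T j\<^sub>0 \<union> L"
    and "\<And>j. j\<^sub>0 \<le> j \<Longrightarrow> j < j\<^sub>0 + n \<Longrightarrow> card (T j \<union> L) \<le> J"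
    and "card L \<le> P" and "1 \<le> P"
  shows "R (j\<^sub>0 + n) - (norm (y - Phi *v u))\<^sup>2
      \<le> (1 - A/(B*P))^n * (R j\<^sub>0 - (norm (y - Phi *v u))\<^sup>2)"
  using assms(1,3)
proof (induction n)
  case (Suc n)
  have "supp u \<subseteq> T (j\<^sub>0 + n) \<union> L" using assms(2) T_mono[of j\<^sub>0 "j\<^sub>0 + n"] Suc.prems by auto
  then have "R (Suc (j\<^sub>0 + n)) - (norm (y - Phi *v u))\<^sup>2
      \<le> (1 - A/(B*P)) * (R (j\<^sub>0 + n) - (norm (y - Phi *v u))\<^sup>2)"
    using R_Suc_contraction assms(4,5) Suc.prems by auto
  also have "\<dots> \<le> (1 - A/(B*P)) * ((1 - A/(B*P))^n * (R j\<^sub>0 - (norm (y - Phi *v u))\<^sup>2))"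
    using Suc contraction_factor_bounds[OF assms(5)] by (simp add: mult_left_mono)
  finally show ?case by simp
qed simp

lemma xh_eq_if_supp_subset:
  assumes "supp x \<subseteq> T N" and "N \<le> J"
  shows "xh N = x"
proof (cases "N = 0")
  case True
  then show ?thesis using assms(1) T_0 xh_0 supp_eq_empty_iff[of x] by simp
next
  case False
  have "R N = 0" using R_le[of N x] assms(1) by (simp add: R_def)
  hence "Phi *v (x - xh N) = 0" by (simp add: R_def r_def matrix_vector_mult_diff_distrib)
  moreover have "supp (x - xh N) \<subseteq> T N" using supp_diff_subset[of x "xh N"] supp_xh[of N] assms(1) by auto
  hence "card (supp (x - xh N)) \<le> J" using card_T[of N] assms(2) by (meson card_mono finite order_trans order_refl)
  ultimately have "A * (norm (x - xh N))\<^sup>2 \<le> 0" using rip_lower by fastforce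
  thus ?thesis using A_pos by (simp add: mult_le_0_iff)
qed

end

definition energy :: "real^'n \<Rightarrow> 'n set \<Rightarrow> real" where
  "energy v F = (\<Sum>i\<in>F. (v$i)\<^sup>2)"

text \<open>The minimum is attained by deleting the \<open>P\<close> largest entries of \<open>v\<close> on \<open>G\<close>.\<close>
definition tail_energy :: "real^'n \<Rightarrow> 'n set \<Rightarrow> nat \<Rightarrow> real" where
  "tail_energy v G P = Min (energy v ` {U. U \<subseteq> G \<and> card U = card G - P})"

definition restrict_vec :: "'n set \<Rightarrow> real^'n \<Rightarrow> real^'n" where
  "restrict_vec V v = (\<chi> i. if i \<in> V then v$i else 0)"

lemma energy_nonneg: "0 \<le> energy v F"
  unfolding energy_def by (simp add: sum_nonneg)

lemma energy_mono: "U \<subseteq> V \<Longrightarrow> energy v U \<le> energy v V"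
  unfolding energy_def by (rule sum_mono2) auto

lemma supp_restrict_vec: "supp (restrict_vec V v) \<subseteq> V \<inter> supp v"
  unfolding supp_def restrict_vec_def by auto

lemma norm_restrict_vec_squared: "(norm (restrict_vec V v))\<^sup>2 = energy v V"
proof -
  have "(norm (restrict_vec V v))\<^sup>2 = (\<Sum>i\<in>UNIV. (if i \<in> V then (v$i)\<^sup>2 else 0))"
    unfolding norm_squared_eq_sum restrict_vec_def by (rule sum.cong) auto
  also have "\<dots> = energy v V" unfolding energy_def by (simp add: sum.If_cases)
  finally show ?thesis .
qed

lemma tail_energy_attained:
  obtains L where "L \<subseteq> (G::'n::finite set)" "card L \<le> P" "energy v (G - L) = tail_energy v G P"
proof -
  have "{U. U \<subseteq> G \<and> card U = card G - P} \<noteq> {}"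
    using obtain_subset_with_card_n[of "card G - P" G] by auto
  hence "tail_energy v G P \<in> energy v ` {U. U \<subseteq> G \<and> card U = card G - P}"
    unfolding tail_energy_def by (intro Min_in) auto
  then obtain U where U: "U \<subseteq> G" "card U = card G - P" "energy v U = tail_energy v G P" by auto
  have "card (G - U) \<le> P" using U by (simp add: card_Diff_subset finite_subset)
  moreover have "G - (G - U) = U" using U by auto
  ultimately show ?thesis using that[of "G - U"] U by auto
qed

lemma tail_energy_le:
  assumes "U \<subseteq> (G::'n::finite set)" "card G - P \<le> card U"
  shows "tail_energy v G P \<le> energy v U"
proof -
  obtain U' where U': "U' \<subseteq> U" "card U' = card G - P"
    using obtain_subset_with_card_n[OF assms(2)] by auto
  have "tail_energy v G P \<le> energy v U'"
    unfolding tail_energy_def using U' assms by (intro Min_le) auto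
  also have "\<dots> \<le> energy v U" using U' energy_mono by auto
  finally show ?thesis .
qed

lemma tail_energy_nonneg: "0 \<le> tail_energy v (G::'n::finite set) P"
  using energy_nonneg by (metis tail_energy_attained)

lemma tail_energy_0: "tail_energy v (G::'n::finite set) 0 = energy v G"
proof -
  have "{U. U \<subseteq> G \<and> card U = card G - 0} = {G}" by (auto dest: card_subset_eq[rotated])
  thus ?thesis unfolding tail_energy_def by simp
qed

lemma tail_energy_eq_0: "card (G::'n::finite set) \<le> P \<Longrightarrow> tail_energy v G P = 0"
proof -
  assume "card G \<le> P"
  hence "{U. U \<subseteq> G \<and> card U = card G - P} = {{}}" by auto
  thus ?thesis unfolding tail_energy_def by (simp add: energy_def)
qed

locale omp_sparse = omp_rip +
  fixes K Nf :: nat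
  assumes x_sparse: "card (supp x) \<le> K" and Nf_le_N: "Nf \<le> N" and Nf_K_le_J: "Nf + K \<le> J"
begin

definition "missed j = supp x - T j"

lemma missed_antimono: "j \<le> j' \<Longrightarrow> j' \<le> N \<Longrightarrow> missed j' \<subseteq> missed j"
  unfolding missed_def using T_mono by auto

lemma R_lower: assumes "j \<le> Nf" shows "A * energy x (missed j) \<le> R j"
proof -
  define z where "z = x - xh j"
  have j: "j \<le> N" using assms Nf_le_N by simp
  have "supp z \<subseteq> supp x \<union> T j" using supp_diff_subset[of x "xh j"] supp_xh[OF j] unfolding z_def by auto
  hence "card (supp z) \<le> card (supp x) + card (T j)" by (meson card_Un_le card_mono finite le_trans)
  hence "card (supp z) \<le> J" using card_T[OF j] x_sparse assms Nf_K_le_J by linarith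
  from rip_lower[OF this] have Phi_z: "A * (norm z)\<^sup>2 \<le> R j"
    by (simp add: R_def r_def z_def matrix_vector_mult_diff_distrib)
  have "xh j $ i = 0" if "i \<in> missed j" for i
    using that supp_xh[OF j] unfolding missed_def supp_def by blast
  hence "energy x (missed j) = (\<Sum>i\<in>missed j. (z$i)\<^sup>2)"
    unfolding energy_def by (intro sum.cong) (simp_all add: z_def)
  also have "\<dots> \<le> (norm z)\<^sup>2" by (rule sum_squares_le_norm_squared)
  finally show ?thesis using Phi_z A_pos by (meson mult_left_mono less_imp_le order_trans)
qed

lemma norm_restrict_vec_image:
  assumes "V \<subseteq> supp x" shows "(norm (Phi *v restrict_vec V x))\<^sup>2 \<le> B * energy x V"
proof -
  have "card (supp (restrict_vec V x)) \<le> card (supp x)"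
    using supp_restrict_vec[of V x] by (simp add: card_mono)
  hence "card (supp (restrict_vec V x)) \<le> J" using x_sparse Nf_K_le_J by simp
  from rip_upper[OF this] show ?thesis by (simp add: norm_restrict_vec_squared)
qed

lemma R_upper: assumes "j \<le> N" shows "R j \<le> B * energy x (missed j)"
proof -
  have "x - restrict_vec (T j) x = restrict_vec (missed j) x"
    by (simp add: missed_def restrict_vec_def supp_def vec_eq_iff)
  hence eq: "y - Phi *v restrict_vec (T j) x = Phi *v restrict_vec (missed j) x"
    by (simp flip: matrix_vector_mult_diff_distrib)
  have "supp (restrict_vec (T j) x) \<subseteq> T j" using supp_restrict_vec by blast
  hence "R j \<le> (norm (Phi *v restrict_vec (missed j) x))\<^sup>2" using R_le assms eq by metis
  also have "\<dots> \<le> B * energy x (missed j)"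
    by (rule norm_restrict_vec_image) (auto simp: missed_def)
  finally show ?thesis .
qed

text \<open>The competitor keeps, besides \<open>T\<^sub>k\<close>, the \<open>P\<close> largest entries of \<open>x\<close> missed at \<open>k\<close>.\<close>
lemma R_after_phase:
  fixes P :: nat
  assumes "k \<le> a" and "a + n \<le> Nf" and "1 \<le> P"
  shows "R (a + n) \<le> (1 - (1 - A/(B*P))^n) * (B * tail_energy x (missed k) P) + (1 - A/(B*P))^n * R a"
proof -
  define f where "f = (1 - A/(B*P))^n"
  obtain L where L: "L \<subseteq> missed k" "card L \<le> P" "energy x (missed k - L) = tail_energy x (missed k) P"
    using tail_energy_attained by blast
  define u where "u = x - restrict_vec (missed k - L) x"
  have N: "a \<le> N" "a + n \<le> N" using assms Nf_le_N by auto
  have "supp u \<subseteq> T k \<union> L"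
    unfolding u_def missed_def supp_def restrict_vec_def by auto
  hence u: "supp u \<subseteq> T a \<union> L" using T_mono[OF assms(1) N(1)] by auto
  have "card (T j \<union> L) \<le> J" if "j < a + n" for j
  proof -
    have "card L \<le> card (supp x)" using L(1) unfolding missed_def by (intro card_mono) auto
    thus ?thesis using card_Un_le[of "T j" L] card_T[of j] that assms x_sparse Nf_K_le_J N by linarith
  qed
  hence "R (a + n) - (norm (y - Phi *v u))\<^sup>2 \<le> f * (R a - (norm (y - Phi *v u))\<^sup>2)"
    unfolding f_def using R_contraction[OF N(2) u _ L(2) assms(3)] by simp
  hence "R (a + n) \<le> (1 - f) * (norm (y - Phi *v u))\<^sup>2 + f * R a" by (simp add: algebra_simps)
  moreover have "y - Phi *v u = Phi *v restrict_vec (missed k - L) x"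
    by (simp add: u_def matrix_vector_mult_diff_distrib)
  hence "(norm (y - Phi *v u))\<^sup>2 \<le> B * tail_energy x (missed k) P"
    using norm_restrict_vec_image[of "missed k - L"] L(3) unfolding missed_def by auto
  moreover have "f \<le> 1"
    using contraction_factor_bounds[OF assms(3)] unfolding f_def by (auto intro: power_le_one)
  ultimately show ?thesis unfolding f_def[symmetric]
    using mult_left_mono[of "(norm (y - Phi *v u))\<^sup>2" "B * tail_energy x (missed k) P" "1 - f"]
    by linarith
qed

end

locale omp_schedule = omp_sparse +
  fixes c :: real
  assumes c_bound: "- (4 * (1 + d) / (1 - d)) * ln (1/2 - sqrt (d / (2 + 2 * d))) \<le> c"
    and Nf_eq: "Nf = nat \<lfloor>c * real K\<rfloor>"
begin

definition "eps = exp (- (A / B) * (c / 4))"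

text \<open>A round started at iteration \<open>k\<close> runs phases \<open>i = 1, 2, \<dots>\<close>; phase \<open>i\<close> lasts
  \<open>phase_len i\<close> iterations and ends at iteration \<open>start k i\<close>.\<close>
definition "phase_len i = nat \<lfloor>c / 4 * 2 ^ i\<rfloor>"
definition "start k i = k + (\<Sum>l\<in>{1..i}. phase_len l)"
definition "shrink i = (1 - A / (B * real (2 ^ i - 1 :: nat))) ^ phase_len i"
definition "tail k i = tail_energy x (missed k) (2 ^ i - 1)"

lemma eps_pos: "0 < eps"
  and eps_le_half: "eps \<le> 1/2"
  and eps_rate: "4 * eps * (1 - eps) \<le> A / B"
  and rate_c: "2/3 \<le> A / B * (c / 4)"
proof -
  define q where "q = 1/2 - sqrt (d / (2 + 2 * d))"
  note q = omp_rate_root[OF d_nonneg d_less_1, folded q_def]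
  have "- (4 * B / A) * ln q \<le> c" using c_bound unfolding q_def A_def B_def by simp
  hence ln_q: "- (A / B) * (c / 4) \<le> ln q" using A_pos B_pos by (simp add: field_simps)
  hence eps_q: "eps \<le> q" unfolding eps_def using q(1) by (metis exp_le_cancel_iff exp_ln)
  show "0 < eps" unfolding eps_def by simp
  show "eps \<le> 1/2" using eps_q q(2) by simp
  have "0 \<le> (q - eps) * (1 - q - eps)" using eps_q q(2) by (intro mult_nonneg_nonneg) auto
  thus "4 * eps * (1 - eps) \<le> A / B" using q(3) unfolding A_def B_def by (simp add: algebra_simps)
  have "ln q \<le> ln (1/2)" using q(1,2) by simp
  hence "ln 2 \<le> A / B * (c / 4)" using ln_q by (simp add: ln_div)
  thus "2/3 \<le> A / B * (c / 4)" using ln2_ge_two_thirds by linarith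
qed

lemma c_pos: "0 < c"
  using rate_c zero_less_mult_pos[of "A / B" "c / 4"] A_pos B_pos by simp

lemma shrink_le_eps: "1 \<le> i \<Longrightarrow> shrink i \<le> eps"
  using phase_contraction_le_exp[of "A / B" "c / 4" i] A_pos B_pos A_le_B rate_c
  unfolding phase_len_def shrink_def eps_def by simp

lemma shrink_nonneg: "1 \<le> i \<Longrightarrow> 0 \<le> shrink i"
proof -
  assume "1 \<le> i"
  hence "(2::nat) ^ 1 \<le> 2 ^ i" by (rule power_increasing) simp
  thus ?thesis using contraction_factor_bounds(1)[of "2 ^ i - 1"] unfolding shrink_def by simp
qed

lemma le_Nf: "real j \<le> c * real K \<Longrightarrow> j \<le> Nf"
  unfolding Nf_eq by (simp add: le_nat_floor)

lemma start_ge: "k \<le> start k i"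
  unfolding start_def by simp

lemma start_Suc: "start k (Suc i) = start k i + phase_len (Suc i)"
  unfolding start_def by simp

lemma start_Suc_le: "real (start k (Suc L)) \<le> real k + c * 2 ^ L"
proof -
  have "real (\<Sum>l\<in>{1..Suc L}. phase_len l) \<le> (\<Sum>l\<in>{1..Suc L}. c / 4 * 2 ^ l)"
    unfolding of_nat_sum phase_len_def using c_pos by (intro sum_mono of_nat_floor) simp
  also have "\<dots> = c / 4 * (\<Sum>l\<in>{1..Suc L}. 2 ^ l)" by (rule sum_distrib_left[symmetric])
  also have "\<dots> = c / 4 * (4 * 2 ^ L - 2)" unfolding sum_power2_atLeast1_atMost by simp
  also have "\<dots> \<le> c * 2 ^ L" using c_pos by (simp add: algebra_simps)
  finally show ?thesis unfolding start_def by simp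
qed

lemma R_start_Suc:
  assumes "start k (Suc i) \<le> Nf"
  shows "R (start k (Suc i))
    \<le> (1 - shrink (Suc i)) * (B * tail k (Suc i)) + shrink (Suc i) * R (start k i)"
proof -
  have "1 \<le> (2::nat) ^ Suc i - 1" using less_exp[of "Suc i"] by simp
  from R_after_phase[where k = k and a = "start k i" and n = "phase_len (Suc i)", OF start_ge _ this]
    assms show ?thesis
    unfolding shrink_def tail_def start_Suc by simp
qed

lemma B_tail_nonneg: "0 \<le> B * tail k i"
  using B_pos tail_energy_nonneg unfolding tail_def by (intro mult_nonneg_nonneg) (simp_all add: less_imp_le)

lemma R_start_le:
  assumes "start k j \<le> Nf" and "\<And>i. i < j \<Longrightarrow> 2 * eps * tail k i \<le> tail k (Suc i)"
  shows "R (start k j) \<le> 2 * (1 - eps) * (B * tail k j)"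
  using assms
proof (induction j)
  case 0
  have "R (start k 0) \<le> B * tail k 0"
    using R_upper[of k] 0 Nf_le_N by (simp add: start_def tail_def tail_energy_0)
  also have "\<dots> \<le> 2 * (1 - eps) * (B * tail k 0)"
    using eps_le_half B_tail_nonneg mult_right_mono[of 1 "2 * (1 - eps)" "B * tail k 0"] by simp
  finally show ?case .
next
  case (Suc j)
  have g: "0 \<le> shrink (Suc j)" "shrink (Suc j) \<le> eps" using shrink_nonneg shrink_le_eps by auto
  have "start k j \<le> Nf" using Suc.prems(1) unfolding start_Suc by simp
  hence "R (start k j) \<le> 2 * (1 - eps) * (B * tail k j)" using Suc by simp
  from mult_left_mono[OF this g(1)] have "R (start k (Suc j))
      \<le> (1 - shrink (Suc j)) * (B * tail k (Suc j)) + shrink (Suc j) * (2 * (1 - eps) * (B * tail k j))"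
    using R_start_Suc[OF Suc.prems(1)] by linarith
  also have "\<dots> \<le> 2 * (1 - eps) * (B * tail k (Suc j))"
  proof (rule mix_le_of_slow_decay[OF eps_pos eps_le_half g])
    show "0 \<le> B * tail k j" by (rule B_tail_nonneg)
    show "2 * eps * (B * tail k j) \<le> B * tail k (Suc j)"
      using Suc.prems(2)[of j] B_pos mult_left_mono[of _ _ B] by (simp add: algebra_simps)
  qed
  finally show ?case .
qed

text \<open>Once the tail energy drops sharply, the lower bound \<open>R \<ge> A \<cdot> energy\<close> forces the
  missed energy below \<open>tail k L\<close>, so at least \<open>2\<^sup>L\<close> missed indices have been selected.\<close>
lemma round_detects:
  assumes "start k (Suc L) \<le> Nf" and "tail k (Suc L) < 2 * eps * tail k L"
    and "\<And>i. i < L \<Longrightarrow> 2 * eps * tail k i \<le> tail k (Suc i)"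
  shows "card (missed (start k (Suc L))) + 2 ^ L \<le> card (missed k)"
proof -
  let ?j = "start k (Suc L)"
  have g: "0 \<le> shrink (Suc L)" "shrink (Suc L) \<le> eps" using shrink_nonneg shrink_le_eps by auto
  have "start k L \<le> Nf" using assms(1) unfolding start_Suc by simp
  hence "R (start k L) \<le> 2 * (1 - eps) * (B * tail k L)" using R_start_le assms(3) by blast
  from mult_left_mono[OF this g(1)] have "R ?j
      \<le> (1 - shrink (Suc L)) * (B * tail k (Suc L)) + shrink (Suc L) * (2 * (1 - eps) * (B * tail k L))"
    using R_start_Suc[OF assms(1)] by linarith
  also have "\<dots> < 4 * eps * (1 - eps) * (B * tail k L)"
  proof (rule mix_less_of_fast_decay[OF eps_pos eps_le_half g])
    show "0 \<le> B * tail k (Suc L)" by (rule B_tail_nonneg)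
    show "B * tail k (Suc L) < 2 * eps * (B * tail k L)"
      using assms(2) B_pos mult_strict_left_mono[of _ _ B] by (simp add: algebra_simps)
  qed
  also have "\<dots> \<le> A * tail k L"
  proof -
    have "4 * eps * (1 - eps) * B \<le> A" using eps_rate B_pos by (simp add: le_divide_eq)
    from mult_right_mono[OF this tail_energy_nonneg] show ?thesis unfolding tail_def by (simp add: algebra_simps)
  qed
  finally have "A * energy x (missed ?j) < A * tail k L" using R_lower[OF assms(1)] by linarith
  hence "energy x (missed ?j) < tail k L" using A_pos by simp
  moreover have "missed ?j \<subseteq> missed k" using missed_antimono start_ge assms(1) Nf_le_N by auto
  ultimately have "\<not> card (missed k) - (2 ^ L - 1) \<le> card (missed ?j)"
    using tail_energy_le unfolding tail_def by (meson not_le)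
  moreover have "(1::nat) \<le> 2 ^ L" by simp
  ultimately show ?thesis by linarith
qed

lemma tail_0_pos: "missed k \<noteq> {} \<Longrightarrow> 0 < tail k 0"
proof -
  assume "missed k \<noteq> {}"
  then obtain i where i: "i \<in> missed k" by blast
  hence "0 < (x$i)\<^sup>2" unfolding missed_def supp_def by simp
  also have "\<dots> \<le> energy x (missed k)" unfolding energy_def using i by (intro member_le_sum) auto
  finally show ?thesis unfolding tail_def by (simp add: tail_energy_0)
qed

lemma sharp_drop_exists:
  assumes "missed k \<noteq> {}"
  obtains L where "2 ^ L \<le> card (missed k)" and "tail k (Suc L) < 2 * eps * tail k L"
    and "\<And>i. i < L \<Longrightarrow> 2 * eps * tail k i \<le> tail k (Suc i)"
proof -
  have "tail k (card (missed k)) = 0"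
    unfolding tail_def using less_exp[of "card (missed k)"] by (intro tail_energy_eq_0) linarith
  moreover have "0 < 2 * eps" using eps_pos by simp
  ultimately obtain L where drop: "tail k (Suc L) < 2 * eps * tail k L"
    and slow: "\<And>i. i < L \<Longrightarrow> 2 * eps * tail k i \<le> tail k (Suc i)"
    and pos: "0 < tail k L"
    using first_sharp_drop[of "tail k", OF tail_0_pos[OF assms]] by blast
  have "2 ^ L \<le> card (missed k)"
  proof (rule ccontr)
    assume "\<not> 2 ^ L \<le> card (missed k)"
    hence "tail k L = 0" unfolding tail_def by (intro tail_energy_eq_0) simp
    thus False using pos by simp
  qed
  from that[OF this drop slow] show ?thesis .
qed

lemma missed_Nf_empty:
  "card (missed k) = s \<Longrightarrow> real k + c * real s \<le> c * real K \<Longrightarrow> missed Nf = {}"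
proof (induction s arbitrary: k rule: less_induct)
  case (less s)
  have k: "k \<le> Nf" using less.prems(2) mult_nonneg_nonneg[of c "real s"] c_pos by (intro le_Nf) linarith
  show ?case
  proof (cases "s = 0")
    case True
    then show ?thesis using less.prems(1) missed_antimono[OF k Nf_le_N] by auto
  next
    case False
    hence ne: "missed k \<noteq> {}" using less.prems(1) by auto
    obtain L where L: "2 ^ L \<le> card (missed k)" and drop: "tail k (Suc L) < 2 * eps * tail k L"
      and slow: "\<And>i. i < L \<Longrightarrow> 2 * eps * tail k i \<le> tail k (Suc i)"
      using sharp_drop_exists[OF ne] by blast
    hence "real (2 ^ L) \<le> real s" using less.prems(1) by (simp only: of_nat_le_iff)
    hence "c * 2 ^ L \<le> c * real s" using c_pos by (simp add: mult_left_mono)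
    hence j: "start k (Suc L) \<le> Nf" using start_Suc_le[of k L] less.prems(2) by (intro le_Nf) linarith
    define s' where "s' = card (missed (start k (Suc L)))"
    have s': "s' + 2 ^ L \<le> s" using round_detects[OF j drop slow] less.prems(1) unfolding s'_def by simp
    hence "real (s' + 2 ^ L) \<le> real s" by (simp only: of_nat_le_iff)
    hence "c * real s' + c * 2 ^ L \<le> c * real s"
      using c_pos mult_left_mono[of "real s' + 2 ^ L" "real s" c] by (simp add: distrib_left)
    hence "real (start k (Suc L)) + c * real s' \<le> c * real K"
      using start_Suc_le[of k L] less.prems(2) by linarith
    moreover have "s' < s" using s' zero_less_power[of "2::nat" L] by linarith
    ultimately show ?thesis using less.IH unfolding s'_def by blast
  qed
qed

lemma supp_subset_T_Nf: "supp x \<subseteq> T Nf"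
proof -
  have "real 0 + c * real (card (supp x)) \<le> c * real K" using x_sparse c_pos by simp
  hence "missed Nf = {}" using missed_Nf_empty[of 0] T_0 unfolding missed_def by simp
  thus ?thesis unfolding missed_def by blast
qed

end

theorem corollary1:
  fixes Phi :: "real^'n^'m" and x :: "real^'n" and c :: real and K :: nat and \<delta> :: real
    and T :: "nat \<Rightarrow> 'n set" and xh :: "nat \<Rightarrow> real^'n"
  assumes "c > 1"
    and "sparse K x"
    and "\<delta> = ric Phi (nat \<lfloor>(c + 1) * real K\<rfloor>)"
    and "\<delta> < 1"
    and "c \<ge> - (4 * (1 + \<delta>) / (1 - \<delta>)) * ln (1/2 - sqrt (\<delta> / (2 + 2 * \<delta>)))"
    and "omp_run Phi (Phi *v x) (nat \<lceil>c * real K\<rceil>) T xh"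
  shows "xh (nat \<lceil>c * real K\<rceil>) = x"
proof (cases "K = 0")
  case True
  hence "x = 0" using assms(2) supp_eq_empty_iff[of x] unfolding sparse_def by simp
  moreover have "xh 0 = 0" using assms(6) unfolding omp_run_def by simp
  ultimately show ?thesis using True by simp
next
  case False
  define N where "N = nat \<lceil>c * real K\<rceil>"
  define J where "J = nat \<lfloor>(c + 1) * real K\<rfloor>"
  define Nf where "Nf = nat \<lfloor>c * real K\<rfloor>"
  note counts = omp_iteration_counts[OF assms(1), of K, folded N_def J_def Nf_def]
  interpret omp_schedule Phi x T xh N \<delta> J K Nf c
  proof unfold_locales
    show "omp_run Phi (Phi *v x) N T xh" using assms(6) unfolding N_def .
    show "rip Phi J \<delta>" "0 \<le> \<delta>" using rip_ric ric_nonneg unfolding assms(3) J_def by blast+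
    show "card (supp x) \<le> K" using assms(2) unfolding sparse_def .
  qed (use assms False counts Nf_def in auto)
  have "supp x \<subseteq> T N" using supp_subset_T_Nf T_mono[OF Nf_le_N] by blast
  with counts(3) show ?thesis using xh_eq_if_supp_subset False unfolding N_def by simp
qed

end
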